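(* Let $S_1$ and $S_2$ be two finite collections of nonvertical line segments in the plane with $|S_1\cup S_2|=n$, such that within each $S_i$ no two segments intersect. Then the number of intersection points between a segment of $S_1$ and a segment of $S_2$ that lie on an envelope (lower or upper) of $S_1$ and also on an envelope (lower or upper) of $S_2$ is $O(n)$.
   Context: For a finite collection $S$ of nonvertical segments (viewed as graphs of partial functions $\mathbb R\to\mathbb R$), the lower envelope is the pointwise minimum of these graphs (the parts visible from $y=-\infty$), and the upper envelope is the pointwise maximum (the parts visible from $y=+\infty$). *)

theory Defs
  imports "HOL-Analysis.Analysis"
begin

definition nonvertical_segment :: "(real \<times> real) set \<Rightarrow> bool" where
  "nonvertical_segment s \<longleftrightarrow> (\<exists>a b. fst a \<noteq> fst b \<and> s = closed_segment a b)"

definition on_lower_envelope :: "(real \<times> real) set set \<Rightarrow> real \<times> real \<Rightarrow> bool" where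
  "on_lower_envelope S p \<longleftrightarrow>
     (\<exists>s\<in>S. p \<in> s) \<and> (\<forall>s\<in>S. \<forall>q\<in>s. fst q = fst p \<longrightarrow> snd p \<le> snd q)"

definition on_upper_envelope :: "(real \<times> real) set set \<Rightarrow> real \<times> real \<Rightarrow> bool" where
  "on_upper_envelope S p \<longleftrightarrow>
     (\<exists>s\<in>S. p \<in> s) \<and> (\<forall>s\<in>S. \<forall>q\<in>s. fst q = fst p \<longrightarrow> snd q \<le> snd p)"

definition on_envelope :: "(real \<times> real) set set \<Rightarrow> real \<times> real \<Rightarrow> bool" where
  "on_envelope S p \<longleftrightarrow> on_lower_envelope S p \<or> on_upper_envelope S p"

definition bichromatic_points ::
  "(real \<times> real) set set \<Rightarrow> (real \<times> real) set set \<Rightarrow> (real \<times> real) set" where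
  "bichromatic_points S1 S2 = {p. \<exists>s1\<in>S1. \<exists>s2\<in>S2. s1 \<inter> s2 = {p}}"

end

theory Submission
  imports Defs
begin

text \<open>Let X be the set of abscissae of segment endpoints, so |X| \<le> 2n. A vertical
  line carries at most one lower and one upper envelope point of each family, so at most
  2|X| of the counted points lie over X. Every other point lies in an open slab between
  consecutive elements of X, which each segment meeting the slab spans. Two disjoint
  segments of one family cannot both appear on the same envelope inside a slab, since
  they would have to cross there; so within a slab the envelope side chosen for each
  family determines the two segments, hence the point. This gives at most 4 points per
  slab and at most 12n points in total.\<close>

lemma fst_image_nonvertical_segment:
  assumes "nonvertical_segment s"
  shows "fst ` s = {Inf (fst ` s)..Sup (fst ` s)}"
proof -
  obtain a b where s: "s = closed_segment a b"
    using assms unfolding nonvertical_segment_def by blast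
  have "fst ` s = closed_segment (fst a) (fst b)"
    unfolding s by (rule closed_segment_linear_image[OF linear_fst, symmetric])
  also have "\<dots> = {min (fst a) (fst b)..max (fst a) (fst b)}"
    by (simp add: closed_segment_eq_real_ivl)
  finally show ?thesis by simp
qed

lemma convex_nonvertical_segment: "nonvertical_segment s \<Longrightarrow> convex s"
  unfolding nonvertical_segment_def by auto

lemma crossing_convex_sets_intersect:
  fixes p p' q q' :: "real \<times> real"
  assumes "convex s" "convex t" "p \<in> s" "p' \<in> s" "q' \<in> t" "q \<in> t"
    and "fst q' = fst p" "fst p' = fst q"
    and "(snd q' - snd p) * (snd q - snd p') \<le> 0"
  shows "s \<inter> t \<noteq> {}"
proof -
  define d0 d1 where "d0 = snd q' - snd p" and "d1 = snd q - snd p'"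
  define l where "l = d0 / (d0 - d1)"
  have signs: "(0 \<le> d0 \<and> d1 \<le> 0) \<or> (d0 \<le> 0 \<and> 0 \<le> d1)"
    using assms(9) unfolding d0_def d1_def by (simp add: mult_le_0_iff)
  \<comment> \<open>If d0 = d1 then both vanish, and the junk value l = 0 still works.\<close>
  have l_eq: "l * (d0 - d1) = d0"
  proof (cases "d0 = d1")
    case True
    then show ?thesis using signs by auto
  next
    case False
    then show ?thesis unfolding l_def by simp
  qed
  have l_bounds: "0 \<le> l" "l \<le> 1"
    using signs unfolding l_def by (auto simp: divide_simps)
  have "(1 - l) *\<^sub>R p + l *\<^sub>R p' \<in> s"
    using convexD_alt[OF assms(1,3,4) l_bounds] .
  moreover have "(1 - l) *\<^sub>R q' + l *\<^sub>R q \<in> t"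
    using convexD_alt[OF assms(2,5,6) l_bounds] .
  moreover have "(1 - l) *\<^sub>R p + l *\<^sub>R p' = (1 - l) *\<^sub>R q' + l *\<^sub>R q"
  proof -
    have "(1 - l) * snd p + l * snd p' = (1 - l) * snd q' + l * snd q"
      using l_eq unfolding d0_def d1_def by (simp add: algebra_simps)
    then show ?thesis using assms(7,8) by (simp add: prod_eq_iff)
  qed
  ultimately show ?thesis by (metis IntI empty_iff)
qed

lemma envelope_convex_members_eq:
  assumes "pairwise disjnt T" "s \<in> T" "t \<in> T" "convex s" "convex t"
    and "p \<in> s" "p' \<in> s" "q \<in> t" "q' \<in> t" "fst p' = fst q" "fst q' = fst p"
    and "(on_lower_envelope T p \<and> on_lower_envelope T q) \<or>
         (on_upper_envelope T p \<and> on_upper_envelope T q)"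
  shows "s = t"
proof (rule ccontr)
  assume "s \<noteq> t"
  then have "s \<inter> t = {}"
    using assms(1-3) unfolding pairwise_def disjnt_def by blast
  moreover have "(snd q' - snd p) * (snd q - snd p') \<le> 0"
    using assms(12)
  proof
    assume "on_lower_envelope T p \<and> on_lower_envelope T q"
    then have "snd p \<le> snd q'" "snd q \<le> snd p'"
      using assms(2,3,7,9-11) unfolding on_lower_envelope_def by auto
    then show ?thesis by (simp add: mult_nonneg_nonpos)
  next
    assume "on_upper_envelope T p \<and> on_upper_envelope T q"
    then have "snd q' \<le> snd p" "snd p' \<le> snd q"
      using assms(2,3,7,9-11) unfolding on_upper_envelope_def by auto
    then show ?thesis by (simp add: mult_nonpos_nonneg)
  qed
  then have "s \<inter> t \<noteq> {}"
    by (rule crossing_convex_sets_intersect[OF assms(4,5,6,7,9,8,11,10)])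
  ultimately show False by blast
qed

lemma on_lower_envelope_unique:
  assumes "on_lower_envelope S p" "on_lower_envelope S q" "fst p = fst q"
  shows "p = q"
proof -
  obtain sp sq where "sp \<in> S" "p \<in> sp" "sq \<in> S" "q \<in> sq"
    using assms(1,2) unfolding on_lower_envelope_def by blast
  then have "snd p \<le> snd q" "snd q \<le> snd p"
    using assms unfolding on_lower_envelope_def by auto
  then show ?thesis using assms(3) by (simp add: prod_eq_iff)
qed

lemma on_upper_envelope_unique:
  assumes "on_upper_envelope S p" "on_upper_envelope S q" "fst p = fst q"
  shows "p = q"
proof -
  obtain sp sq where "sp \<in> S" "p \<in> sp" "sq \<in> S" "q \<in> sq"
    using assms(1,2) unfolding on_upper_envelope_def by blast
  then have "snd p \<le> snd q" "snd q \<le> snd p"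
    using assms unfolding on_upper_envelope_def by auto
  then show ?thesis using assms(3) by (simp add: prod_eq_iff)
qed

lemma card_envelope_points_on_vertical_lines:
  assumes "finite X" "\<And>p. p \<in> P \<Longrightarrow> on_envelope S p"
  shows "card {p \<in> P. fst p \<in> X} \<le> 2 * card X"
proof -
  let ?key = "\<lambda>p. (fst p, on_lower_envelope S p)"
  have "inj_on ?key {p \<in> P. fst p \<in> X}"
  proof (rule inj_onI)
    fix p q assume "p \<in> {p \<in> P. fst p \<in> X}" "q \<in> {p \<in> P. fst p \<in> X}" "?key p = ?key q"
    then have "on_envelope S p" "on_envelope S q" "fst p = fst q"
      and "on_lower_envelope S p = on_lower_envelope S q"
      using assms(2) by auto
    then show "p = q"
      using on_lower_envelope_unique on_upper_envelope_unique
      unfolding on_envelope_def by blast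
  qed
  moreover have "?key ` {p \<in> P. fst p \<in> X} \<subseteq> X \<times> UNIV" by auto
  ultimately have "card {p \<in> P. fst p \<in> X} \<le> card (X \<times> (UNIV :: bool set))"
    using assms(1) by (intro card_inj_on_le) auto
  then show ?thesis by (simp add: card_cartesian_product)
qed

definition endpoint_abscissae :: "(real \<times> real) set set \<Rightarrow> real set" where
  "endpoint_abscissae S = (\<lambda>s. Inf (fst ` s)) ` S \<union> (\<lambda>s. Sup (fst ` s)) ` S"

lemma finite_endpoint_abscissae: "finite S \<Longrightarrow> finite (endpoint_abscissae S)"
  unfolding endpoint_abscissae_def by simp

lemma card_endpoint_abscissae_le:
  assumes "finite S"
  shows "card (endpoint_abscissae S) \<le> 2 * card S"
proof -
  have "card (endpoint_abscissae S)
      \<le> card ((\<lambda>s. Inf (fst ` s)) ` S) + card ((\<lambda>s. Sup (fst ` s)) ` S)"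
    unfolding endpoint_abscissae_def by (rule card_Un_le)
  also have "\<dots> \<le> card S + card S"
    by (intro add_mono card_image_le assms)
  finally show ?thesis by simp
qed

lemma fst_image_mem_if_no_endpoint_between:
  assumes "nonvertical_segment s" "s \<in> S" "p \<in> s"
    and "{min (fst p) x..max (fst p) x} \<inter> endpoint_abscissae S = {}"
  shows "x \<in> fst ` s"
proof -
  have range: "fst ` s = {Inf (fst ` s)..Sup (fst ` s)}"
    using assms(1) by (rule fst_image_nonvertical_segment)
  have "Inf (fst ` s) \<in> endpoint_abscissae S" "Sup (fst ` s) \<in> endpoint_abscissae S"
    using assms(2) unfolding endpoint_abscissae_def by auto
  then have "Inf (fst ` s) \<notin> {min (fst p) x..max (fst p) x}"
    and "Sup (fst ` s) \<notin> {min (fst p) x..max (fst p) x}"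
    using assms(4) by blast+
  moreover have "fst p \<in> {Inf (fst ` s)..Sup (fst ` s)}"
    using assms(3) range by blast
  ultimately have "x \<in> {Inf (fst ` s)..Sup (fst ` s)}"
    by (auto simp: min_def max_def split: if_splits)
  then show ?thesis using range by simp
qed

lemma envelope_segments_eq_in_slab:
  assumes "T \<subseteq> S" "\<forall>s\<in>S. nonvertical_segment s" "pairwise disjnt T"
    and "s \<in> T" "t \<in> T" "p \<in> s" "q \<in> t"
    and "{min (fst p) (fst q)..max (fst p) (fst q)} \<inter> endpoint_abscissae S = {}"
    and "(on_lower_envelope T p \<and> on_lower_envelope T q) \<or>
         (on_upper_envelope T p \<and> on_upper_envelope T q)"
  shows "s = t"
proof -
  have s: "nonvertical_segment s" and t: "nonvertical_segment t"
    using assms(1,2,4,5) by auto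
  have "fst q \<in> fst ` s"
    using fst_image_mem_if_no_endpoint_between[OF s _ assms(6,8)] assms(1,4) by blast
  then obtain p' where "p' \<in> s" "fst p' = fst q" by auto
  moreover have "{min (fst q) (fst p)..max (fst q) (fst p)} \<inter> endpoint_abscissae S = {}"
    using assms(8) by (simp add: min.commute max.commute)
  then have "fst p \<in> fst ` t"
    using fst_image_mem_if_no_endpoint_between[OF t _ assms(7)] assms(1,5) by blast
  then obtain q' where "q' \<in> t" "fst q' = fst p" by auto
  ultimately show ?thesis
    using envelope_convex_members_eq[OF assms(3-5) _ _ assms(6) _ assms(7) _ _ _ assms(9)]
      convex_nonvertical_segment s t by blast
qed

lemma card_less_eq_imp_between_disjoint:
  fixes X :: "'a::linorder set"
  assumes "finite X" "x \<notin> X" "y \<notin> X" "card {z \<in> X. z < x} = card {z \<in> X. z < y}"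
  shows "{min x y..max x y} \<inter> X = {}"
proof -
  have "{x..y} \<inter> X = {}"
    if "finite X" "y \<notin> X" "x \<le> y" "card {z \<in> X. z < x} = card {z \<in> X. z < y}" for x y
  proof -
    have below_eq: "{z \<in> X. z < x} = {z \<in> X. z < y}"
      using that by (intro card_subset_eq) auto
    show ?thesis
    proof (rule ccontr)
      assume "{x..y} \<inter> X \<noteq> {}"
      then obtain z where z: "z \<in> X" "x \<le> z" "z \<le> y" by auto
      then have "z < y" using that(2) by (auto simp: le_less)
      then have "z \<in> {z \<in> X. z < x}" using below_eq z(1) by blast
      then show False using z(2) leD by blast
    qed
  qed
  then show ?thesis
    using assms by (cases "x \<le> y") (auto simp: min_def max_def)
qed

lemma card_endpoint_abscissae_less_pos:
  assumes "finite S" "s \<in> S" "nonvertical_segment s" "p \<in> s" "fst p \<notin> endpoint_abscissae S"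
  shows "0 < card {z \<in> endpoint_abscissae S. z < fst p}"
proof -
  have "Inf (fst ` s) \<in> endpoint_abscissae S"
    using assms(2) unfolding endpoint_abscissae_def by blast
  moreover have "Inf (fst ` s) \<le> fst p"
    using assms(4) fst_image_nonvertical_segment[OF assms(3)] by (metis atLeastAtMost_iff imageI)
  ultimately have "Inf (fst ` s) \<in> {z \<in> endpoint_abscissae S. z < fst p}"
    using assms(5) by (auto simp: order.order_iff_strict)
  then show ?thesis
    using finite_endpoint_abscissae[OF assms(1)] by (auto simp: card_gt_0_iff)
qed

lemma card_bichromatic_envelope_points_in_slabs:
  assumes "finite S1" "finite S2" "\<forall>s\<in>S1 \<union> S2. nonvertical_segment s"
    and "pairwise disjnt S1" "pairwise disjnt S2"
  defines "X \<equiv> endpoint_abscissae (S1 \<union> S2)"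
  shows "card {p \<in> bichromatic_points S1 S2. on_envelope S1 p \<and> on_envelope S2 p \<and> fst p \<notin> X}
    \<le> 4 * card X"
proof -
  let ?B = "{p \<in> bichromatic_points S1 S2. on_envelope S1 p \<and> on_envelope S2 p \<and> fst p \<notin> X}"
  let ?rank = "\<lambda>p. card {z \<in> X. z < fst p}"
  let ?key = "\<lambda>p. (?rank p, on_lower_envelope S1 p, on_lower_envelope S2 p)"
  have fin: "finite (S1 \<union> S2)" "finite X"
    using assms(1,2) finite_endpoint_abscissae unfolding X_def by auto
  have same_side: "(on_lower_envelope S p \<and> on_lower_envelope S q) \<or>
      (on_upper_envelope S p \<and> on_upper_envelope S q)"
    if "on_envelope S p" "on_envelope S q" "on_lower_envelope S p = on_lower_envelope S q"
    for S p q
    using that unfolding on_envelope_def by blast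
  have "inj_on ?key ?B"
  proof (rule inj_onI)
    fix p q assume p: "p \<in> ?B" and q: "q \<in> ?B" and key: "?key p = ?key q"
    obtain s1 s2 where s: "s1 \<in> S1" "s2 \<in> S2" "s1 \<inter> s2 = {p}"
      using p unfolding bichromatic_points_def by blast
    obtain t1 t2 where t: "t1 \<in> S1" "t2 \<in> S2" "t1 \<inter> t2 = {q}"
      using q unfolding bichromatic_points_def by blast
    have slab: "{min (fst p) (fst q)..max (fst p) (fst q)} \<inter> endpoint_abscissae (S1 \<union> S2) = {}"
      using card_less_eq_imp_between_disjoint[OF fin(2)] p q key unfolding X_def by auto
    have "s1 = t1"
      using envelope_segments_eq_in_slab[OF _ assms(3,4) s(1) t(1) _ _ slab]
        same_side[of S1 p q] p q key s(3) t(3) by blast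
    moreover have "s2 = t2"
      using envelope_segments_eq_in_slab[OF _ assms(3,5) s(2) t(2) _ _ slab]
        same_side[of S2 p q] p q key s(3) t(3) by blast
    ultimately show "p = q" using s(3) t(3) by blast
  qed
  moreover have "?rank p \<in> {1..card X}" if p: "p \<in> ?B" for p
  proof -
    obtain s where "s \<in> S1 \<union> S2" "p \<in> s"
      using p unfolding bichromatic_points_def by blast
    then have "0 < ?rank p"
      using card_endpoint_abscissae_less_pos[OF fin(1)] assms(3) p unfolding X_def by blast
    moreover have "?rank p \<le> card X"
      using fin(2) by (intro card_mono) auto
    ultimately show ?thesis by simp
  qed
  then have "?key ` ?B \<subseteq> {1..card X} \<times> UNIV \<times> UNIV" by auto
  ultimately have "card ?B \<le> card ({1..card X} \<times> (UNIV :: bool set) \<times> (UNIV :: bool set))"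
    by (intro card_inj_on_le) auto
  then show ?thesis by (simp add: card_cartesian_product)
qed

theorem lemma1:
  "\<exists>C::real. \<forall>S1 S2 :: (real \<times> real) set set.
     finite S1 \<and> finite S2 \<and>
     (\<forall>s\<in>S1 \<union> S2. nonvertical_segment s) \<and>
     pairwise disjnt S1 \<and> pairwise disjnt S2 \<longrightarrow>
     real (card {p \<in> bichromatic_points S1 S2. on_envelope S1 p \<and> on_envelope S2 p})
       \<le> C * real (card (S1 \<union> S2))"
proof (intro exI[of _ 12] allI impI, elim conjE)
  fix S1 S2 :: "(real \<times> real) set set"
  assume fin: "finite S1" "finite S2" and segs: "\<forall>s\<in>S1 \<union> S2. nonvertical_segment s"
    and disj: "pairwise disjnt S1" "pairwise disjnt S2"
  define X where "X = endpoint_abscissae (S1 \<union> S2)"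
  define P where "P = {p \<in> bichromatic_points S1 S2. on_envelope S1 p \<and> on_envelope S2 p}"
  have "card P = card ({p \<in> P. fst p \<in> X} \<union> {p \<in> P. fst p \<notin> X})"
    by (rule arg_cong[where f = card]) blast
  also have "\<dots> \<le> card {p \<in> P. fst p \<in> X} + card {p \<in> P. fst p \<notin> X}"
    by (rule card_Un_le)
  also have "card {p \<in> P. fst p \<in> X} \<le> 2 * card X"
    using fin by (intro card_envelope_points_on_vertical_lines) (auto simp: X_def P_def
      finite_endpoint_abscissae)
  also have "card {p \<in> P. fst p \<notin> X} \<le> 4 * card X"
    using card_bichromatic_envelope_points_in_slabs[OF fin segs disj]
    unfolding P_def X_def by (simp add: conj_assoc)
  also have "card X \<le> 2 * card (S1 \<union> S2)"
    unfolding X_def using fin by (intro card_endpoint_abscissae_le) simp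
  finally have "card P \<le> 12 * card (S1 \<union> S2)" by simp
  then show "real (card P) \<le> 12 * real (card (S1 \<union> S2))" by simp
qed

end
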